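(* Let $\mathcal{C}$ be a cyclic conjugacy class with $n\ge2$ elements in a finite group $G$. Then, up to an overall nonzero scalar, every nondegenerate $\mathrm{Ad}$-invariant bilinear form $\eta$ on $\Omega_0^*$ (equivalently, every invertible matrix $(\eta^{a,b})_{a,b\in\mathcal{C}}$ with $\eta^{g^{-1}ag,\,b}=\eta^{a,\,gbg^{-1}}$ for all $g\in G$, $a,b\in\mathcal{C}$) has the form $$\eta^{a,b}=\delta_{a,b}+\mu$$ for a constant $\mu\neq-1/n$, and conversely each such $\eta$ is nondegenerate and $\mathrm{Ad}$-invariant. The associated metric in the Maurer–Cartan framing (coframing $e^{*a}=\sum_b e_b\eta^{ba}$, metric $g=\sum_a e^{*a}\otimes_H e_a$) is $$g=\sum_{a\in\mathcal{C}}e_a\otimes_H e_a+\mu\,\theta\otimes_H\theta.$$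
   Context: $H=\mathbb{C}[G]$ is the algebra of functions on the finite group $G$; $\Omega_0=\mathrm{span}\{\delta_a: a\in\mathcal{C}\}$, $\Omega_0^*$ its dual, with $G$ acting by conjugation $\mathrm{Ad}$. $\Omega^1(H)$ is the free left $H$-module with basis the Maurer–Cartan forms $\{e_a\}_{a\in\mathcal{C}}$, and $\theta=\sum_{a\in\mathcal{C}}e_a$. A conjugacy class $\mathcal{C}\not\ni e$ with $n\ge2$ elements is cyclic if there exists $t\in\mathcal{C}$ such that $\mathrm{Ad}_t(b)=tbt^{-1}$ restricts to a cyclic permutation of $\mathcal{C}\setminus\{t\}$ and the map $a\mapsto \mathrm{Ad}_a(t)$ is a permutation of $\mathcal{C}$. *)

theory Defs
  imports Complex_Main "HOL-Algebra.Group" "HOL-Library.FuncSet"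
begin

definition Ad :: "('a, 'b) monoid_scheme \<Rightarrow> 'a \<Rightarrow> 'a \<Rightarrow> 'a" where
  "Ad G g b = g \<otimes>\<^bsub>G\<^esub> b \<otimes>\<^bsub>G\<^esub> inv\<^bsub>G\<^esub> g"

definition conj_class :: "('a, 'b) monoid_scheme \<Rightarrow> 'a \<Rightarrow> 'a set" where
  "conj_class G x = {Ad G g x | g. g \<in> carrier G}"

definition is_conj_class :: "('a, 'b) monoid_scheme \<Rightarrow> 'a set \<Rightarrow> bool" where
  "is_conj_class G C \<longleftrightarrow> (\<exists>x\<in>carrier G. C = conj_class G x)"

definition cyclic_class :: "('a, 'b) monoid_scheme \<Rightarrow> 'a set \<Rightarrow> bool" where
  "cyclic_class G C \<longleftrightarrow> is_conj_class G C \<and> \<one>\<^bsub>G\<^esub> \<notin> C \<and> card C \<ge> 2 \<and>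
     (\<exists>t\<in>C. bij_betw (Ad G t) (C - {t}) (C - {t})
            \<and> (\<forall>b\<in>C - {t}. \<forall>c\<in>C - {t}. \<exists>k::nat. (Ad G t ^^ k) b = c)
            \<and> bij_betw (\<lambda>a. Ad G a t) C C)"

definition invertible_on :: "'a set \<Rightarrow> ('a \<Rightarrow> 'a \<Rightarrow> complex) \<Rightarrow> bool" where
  "invertible_on C \<eta> \<longleftrightarrow> (\<exists>\<zeta>.
      (\<forall>a\<in>C. \<forall>c\<in>C. (\<Sum>b\<in>C. \<eta> a b * \<zeta> b c) = (if a = c then 1 else 0)) \<and>
      (\<forall>a\<in>C. \<forall>c\<in>C. (\<Sum>b\<in>C. \<zeta> a b * \<eta> b c) = (if a = c then 1 else 0)))"

definition Ad_invariant :: "('a, 'b) monoid_scheme \<Rightarrow> 'a set \<Rightarrow> ('a \<Rightarrow> 'a \<Rightarrow> complex) \<Rightarrow> bool" where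
  "Ad_invariant G C \<eta> \<longleftrightarrow> (\<forall>g\<in>carrier G. \<forall>a\<in>C. \<forall>b\<in>C.
      \<eta> (inv\<^bsub>G\<^esub> g \<otimes>\<^bsub>G\<^esub> a \<otimes>\<^bsub>G\<^esub> g) b = \<eta> a (g \<otimes>\<^bsub>G\<^esub> b \<otimes>\<^bsub>G\<^esub> inv\<^bsub>G\<^esub> g))"

end

theory Submission
  imports Defs
begin

text \<open>Conjugation acts transitively on the class \<open>C\<close>, so an invariant form \<open>\<eta>\<close> is
  constant on the diagonal, and conjugating \<open>a\<close> to the distinguished element \<open>t\<close> turns an
  off-diagonal entry \<open>\<eta> a b\<close> into \<open>\<eta> t b'\<close> with \<open>b' \<noteq> t\<close>. Since \<open>Ad t\<close> fixes \<open>t\<close> and permutes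
  \<open>C - {t}\<close> in a single orbit, \<open>\<eta> t\<close> is constant on \<open>C - {t}\<close>. Hence \<open>\<eta> = \<alpha> I + \<beta> (J - I)\<close> with
  \<open>J\<close> the all-ones matrix. Such a matrix is invertible iff \<open>\<alpha> \<noteq> \<beta>\<close> and \<open>\<alpha> + (n - 1) \<beta> \<noteq> 0\<close>;
  writing \<open>s = \<alpha> - \<beta>\<close> and \<open>\<mu> = \<beta> / s\<close> the second condition is \<open>\<mu> \<noteq> -1/n\<close>, and then
  \<open>(I + \<nu> J) / s\<close> with \<open>\<nu> = -\<mu> / (1 + n \<mu>)\<close> is the inverse.\<close>

lemma card_ge_2_other:
  assumes "card C \<ge> 2" and "a \<in> C"
  obtains b where "b \<in> C" and "b \<noteq> a"
proof -
  have "finite C" using assms(1) by (metis card.infinite not_numeral_le_zero)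
  then have "card (C - {a}) \<ge> 1" using assms by simp
  then obtain b where "b \<in> C - {a}" by (metis card.empty ex_in_conv not_one_le_zero)
  then show thesis using that by blast
qed

context group
begin

lemma Ad_closed [simp]: "g \<in> carrier G \<Longrightarrow> x \<in> carrier G \<Longrightarrow> Ad G g x \<in> carrier G"
  unfolding Ad_def by simp

lemma Ad_Ad: "g \<in> carrier G \<Longrightarrow> h \<in> carrier G \<Longrightarrow> x \<in> carrier G \<Longrightarrow>
    Ad G g (Ad G h x) = Ad G (g \<otimes> h) x"
  unfolding Ad_def by (simp add: m_assoc inv_mult_group)

lemma Ad_inv_Ad: "g \<in> carrier G \<Longrightarrow> x \<in> carrier G \<Longrightarrow> Ad G (inv g) (Ad G g x) = x"
  by (simp add: Ad_Ad, simp add: Ad_def)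

lemma Ad_inj: "g \<in> carrier G \<Longrightarrow> x \<in> carrier G \<Longrightarrow> y \<in> carrier G \<Longrightarrow>
    Ad G g x = Ad G g y \<longleftrightarrow> x = y"
  by (metis Ad_inv_Ad)

lemma Ad_self: "t \<in> carrier G \<Longrightarrow> Ad G t t = t"
  unfolding Ad_def by (simp add: m_assoc)

lemma is_conj_class_subset: "is_conj_class G C \<Longrightarrow> C \<subseteq> carrier G"
  unfolding is_conj_class_def conj_class_def by auto

lemma is_conj_class_Ad_closed:
  "is_conj_class G C \<Longrightarrow> a \<in> C \<Longrightarrow> g \<in> carrier G \<Longrightarrow> Ad G g a \<in> C"
  unfolding is_conj_class_def conj_class_def by (auto simp: Ad_Ad)

lemma is_conj_class_transitive:
  assumes "is_conj_class G C" and "a \<in> C" and "b \<in> C"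
  obtains g where "g \<in> carrier G" and "Ad G g a = b"
proof -
  obtain x h k where "x \<in> carrier G" "h \<in> carrier G" "k \<in> carrier G"
    and "a = Ad G h x" and "b = Ad G k x"
    using assms unfolding is_conj_class_def conj_class_def by auto
  then have "Ad G (k \<otimes> inv h) a = Ad G (k \<otimes> inv h \<otimes> h) x"
    by (simp add: Ad_Ad)
  also have "\<dots> = b"
    using \<open>h \<in> carrier G\<close> \<open>k \<in> carrier G\<close> \<open>b = Ad G k x\<close> by (simp add: m_assoc)
  finally show thesis using that \<open>h \<in> carrier G\<close> \<open>k \<in> carrier G\<close> by blast
qed

lemma Ad_invariant_iff:
  assumes "is_conj_class G C"
  shows "Ad_invariant G C \<eta> \<longleftrightarrow>
    (\<forall>g\<in>carrier G. \<forall>a\<in>C. \<forall>b\<in>C. \<eta> (Ad G g a) (Ad G g b) = \<eta> a b)"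
proof -
  have sub: "C \<subseteq> carrier G" and closed: "\<And>a g. a \<in> C \<Longrightarrow> g \<in> carrier G \<Longrightarrow> Ad G g a \<in> C"
    using assms is_conj_class_subset is_conj_class_Ad_closed by auto
  have conj_inv: "inv g \<otimes> a \<otimes> g = Ad G (inv g) a" if "g \<in> carrier G" for g a
    using that by (simp add: Ad_def)
  have "Ad_invariant G C \<eta> \<longleftrightarrow>
      (\<forall>g\<in>carrier G. \<forall>a\<in>C. \<forall>b\<in>C. \<eta> (Ad G (inv g) a) b = \<eta> a (Ad G g b))"
    unfolding Ad_invariant_def by (simp add: conj_inv Ad_def[symmetric])
  also have "\<dots> \<longleftrightarrow> (\<forall>g\<in>carrier G. \<forall>a\<in>C. \<forall>b\<in>C. \<eta> (Ad G g a) (Ad G g b) = \<eta> a b)"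
  proof safe
    fix g a b assume "\<forall>g\<in>carrier G. \<forall>a\<in>C. \<forall>b\<in>C. \<eta> (Ad G (inv g) a) b = \<eta> a (Ad G g b)"
      and "g \<in> carrier G" "a \<in> C" "b \<in> C"
    then show "\<eta> (Ad G g a) (Ad G g b) = \<eta> a b"
      using closed sub by (metis Ad_inv_Ad subsetD)
  next
    fix g a b assume "\<forall>g\<in>carrier G. \<forall>a\<in>C. \<forall>b\<in>C. \<eta> (Ad G g a) (Ad G g b) = \<eta> a b"
      and "g \<in> carrier G" "a \<in> C" "b \<in> C"
    moreover have "Ad G g (Ad G (inv g) a) = a"
      using Ad_inv_Ad[of "inv g" a] \<open>g \<in> carrier G\<close> \<open>a \<in> C\<close> sub by auto
    ultimately show "\<eta> (Ad G (inv g) a) b = \<eta> a (Ad G g b)"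
      using closed by (metis inv_closed)
  qed
  finally show ?thesis .
qed

lemma Ad_invariant_if_eq:
  assumes "is_conj_class G C" and "\<forall>a\<in>C. \<forall>b\<in>C. \<eta> a b = (if a = b then x else y)"
  shows "Ad_invariant G C \<eta>"
  using assms is_conj_class_subset is_conj_class_Ad_closed
  by (subst Ad_invariant_iff) (auto simp: Ad_inj subset_iff)

lemma invariant_funpow_Ad:
  assumes "is_conj_class G C" and "t \<in> C" and "b \<in> C"
    and invariant: "\<forall>g\<in>carrier G. \<forall>a\<in>C. \<forall>b\<in>C. \<eta> (Ad G g a) (Ad G g b) = \<eta> a b"
  shows "(Ad G t ^^ k) b \<in> C \<and> \<eta> t ((Ad G t ^^ k) b) = \<eta> t b"
proof (induction k)
  case (Suc k)
  have t: "t \<in> carrier G" using assms is_conj_class_subset by blast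
  with Suc have "\<eta> t (Ad G t ((Ad G t ^^ k) b)) = \<eta> t ((Ad G t ^^ k) b)"
    using invariant \<open>t \<in> C\<close> by (metis Ad_self)
  with Suc t show ?case using assms(1) is_conj_class_Ad_closed by auto
qed (use assms in simp)

lemma cyclic_class_invariant_form:
  assumes "cyclic_class G C"
    and invariant: "\<forall>g\<in>carrier G. \<forall>a\<in>C. \<forall>b\<in>C. \<eta> (Ad G g a) (Ad G g b) = \<eta> a b"
  obtains \<alpha> \<beta> where "\<forall>a\<in>C. \<forall>b\<in>C. \<eta> a b = (if a = b then \<alpha> else \<beta>)"
proof -
  have cc: "is_conj_class G C" using assms unfolding cyclic_class_def by blast
  obtain t where t: "t \<in> C" and orbit: "\<forall>b\<in>C - {t}. \<forall>c\<in>C - {t}. \<exists>k::nat. (Ad G t ^^ k) b = c"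
    using assms unfolding cyclic_class_def by auto
  have sub: "C \<subseteq> carrier G" using cc is_conj_class_subset by blast
  obtain b0 where b0: "b0 \<in> C - {t}"
    using assms t unfolding cyclic_class_def by (meson card_ge_2_other DiffI singletonD)
  have row: "\<eta> t b = \<eta> t b0" if "b \<in> C - {t}" for b
    using orbit b0 that invariant_funpow_Ad[OF cc t _ invariant] by (metis DiffD1)
  have "\<eta> a b = (if a = b then \<eta> t t else \<eta> t b0)" if "a \<in> C" "b \<in> C" for a b
  proof -
    obtain g where g: "g \<in> carrier G" "Ad G g a = t"
      using is_conj_class_transitive[OF cc \<open>a \<in> C\<close> t] by blast
    have "Ad G g b \<in> C" using cc g \<open>b \<in> C\<close> is_conj_class_Ad_closed by blast
    moreover have "Ad G g b = t \<longleftrightarrow> a = b"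
      using g that sub Ad_inj by (metis subsetD)
    ultimately show ?thesis using invariant g that row by (metis DiffI singletonD)
  qed
  then show thesis using that by blast
qed

end

lemma sum_delta_plus_const_mult:
  fixes p q :: "'b :: comm_ring_1"
  assumes "finite C" and "a \<in> C" and "c \<in> C"
  shows "(\<Sum>b\<in>C. ((if a = b then 1 else 0) + p) * ((if b = c then 1 else 0) + q))
    = (if a = c then 1 else 0) + (p + q + of_nat (card C) * p * q)"
proof -
  have "(\<Sum>b\<in>C. ((if a = b then 1 else 0) + p) * ((if b = c then 1 else 0) + q))
      = (\<Sum>b\<in>C. (if b = a then (if a = c then 1 else 0) else 0) + (if b = a then q else 0)
          + (if b = c then p else 0) + p * q)"
    by (intro sum.cong) (auto simp: algebra_simps)
  also have "\<dots> = (if a = c then 1 else 0) + q + p + of_nat (card C) * (p * q)"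
    using assms by (simp only: sum.distrib sum.delta sum_constant if_True)
  finally show ?thesis by (simp add: algebra_simps)
qed

lemma invertible_on_delta_plus_const:
  fixes C :: "'a set" and s \<mu> :: complex
  assumes "finite C" and "s \<noteq> 0" and "1 + of_nat (card C) * \<mu> \<noteq> 0"
    and \<eta>: "\<forall>a\<in>C. \<forall>b\<in>C. \<eta> a b = s * ((if a = b then 1 else 0) + \<mu>)"
  shows "invertible_on C \<eta>"
proof -
  define n where "n = (of_nat (card C) :: complex)"
  define \<nu> where "\<nu> = - \<mu> / (1 + n * \<mu>)"
  have \<nu>: "\<mu> + \<nu> + n * \<mu> * \<nu> = 0" "\<nu> + \<mu> + n * \<nu> * \<mu> = 0"
    using assms(3) unfolding \<nu>_def n_def by (simp_all add: field_simps)
  define \<zeta> :: "'a \<Rightarrow> 'a \<Rightarrow> complex" where "\<zeta> = (\<lambda>a b. ((if a = b then 1 else 0) + \<nu>) / s)"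
  have "(\<Sum>b\<in>C. \<eta> a b * \<zeta> b c) = (if a = c then 1 else 0)"
    and "(\<Sum>b\<in>C. \<zeta> a b * \<eta> b c) = (if a = c then 1 else 0)" if "a \<in> C" "c \<in> C" for a c
  proof -
    have "(\<Sum>b\<in>C. \<eta> a b * \<zeta> b c)
        = (\<Sum>b\<in>C. ((if a = b then 1 else 0) + \<mu>) * ((if b = c then 1 else 0) + \<nu>))"
      and "(\<Sum>b\<in>C. \<zeta> a b * \<eta> b c)
        = (\<Sum>b\<in>C. ((if a = b then 1 else 0) + \<nu>) * ((if b = c then 1 else 0) + \<mu>))"
      using \<eta> that \<open>s \<noteq> 0\<close> unfolding \<zeta>_def by (auto intro!: sum.cong)
    then show "(\<Sum>b\<in>C. \<eta> a b * \<zeta> b c) = (if a = c then 1 else 0)"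
      and "(\<Sum>b\<in>C. \<zeta> a b * \<eta> b c) = (if a = c then 1 else 0)"
      using sum_delta_plus_const_mult[OF \<open>finite C\<close> that, of \<mu> \<nu>]
        sum_delta_plus_const_mult[OF \<open>finite C\<close> that, of \<nu> \<mu>] \<nu>
      unfolding n_def by (simp_all only: add_0_right)
  qed
  then show ?thesis unfolding invertible_on_def by blast
qed

text \<open>If \<open>r = 0\<close>, the all-ones vector lies in the kernel of \<open>\<eta>\<close>.\<close>

lemma invertible_on_row_sum_nonzero:
  assumes "invertible_on C \<eta>" and "finite C" and "t \<in> C"
    and "\<forall>a\<in>C. (\<Sum>b\<in>C. \<eta> a b) = r"
  shows "r \<noteq> 0"
proof
  assume "r = 0"
  obtain \<zeta> where \<zeta>: "\<forall>a\<in>C. \<forall>c\<in>C. (\<Sum>b\<in>C. \<zeta> a b * \<eta> b c) = (if a = c then 1 else 0)"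
    using assms(1) unfolding invertible_on_def by blast
  have "1 = (\<Sum>c\<in>C. if t = c then 1 else (0::complex))"
    using assms by simp
  also have "\<dots> = (\<Sum>c\<in>C. \<Sum>b\<in>C. \<zeta> t b * \<eta> b c)"
    using \<zeta> \<open>t \<in> C\<close> by simp
  also have "\<dots> = (\<Sum>b\<in>C. \<zeta> t b * (\<Sum>c\<in>C. \<eta> b c))"
    by (subst sum.swap) (simp add: sum_distrib_left)
  also have "\<dots> = 0"
    using assms(4) \<open>r = 0\<close> by simp
  finally show False by simp
qed

lemma invertible_on_rows_differ:
  assumes "invertible_on C \<eta>" and "a \<in> C" and "a' \<in> C" and "a \<noteq> a'"
  shows "\<exists>c\<in>C. \<eta> a c \<noteq> \<eta> a' c"
proof (rule ccontr)
  assume "\<not> ?thesis"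
  then have same: "\<forall>c\<in>C. \<eta> a c = \<eta> a' c" by simp
  obtain \<zeta> where \<zeta>: "\<forall>a\<in>C. \<forall>c\<in>C. (\<Sum>b\<in>C. \<eta> a b * \<zeta> b c) = (if a = c then 1 else 0)"
    using assms(1) unfolding invertible_on_def by blast
  have "(\<Sum>b\<in>C. \<eta> a b * \<zeta> b a) = (\<Sum>b\<in>C. \<eta> a' b * \<zeta> b a)"
    using same by (intro sum.cong) auto
  then show False using \<zeta> assms by simp
qed

lemma invertible_on_two_valued_rescale:
  assumes "invertible_on C \<eta>" and "finite C" and "card C \<ge> 2"
    and \<eta>: "\<forall>a\<in>C. \<forall>b\<in>C. \<eta> a b = (if a = b then \<alpha> else \<beta>)"
  shows "\<exists>s \<mu>. s \<noteq> 0 \<and> \<mu> \<noteq> - 1 / of_nat (card C) \<and>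
    (\<forall>a\<in>C. \<forall>b\<in>C. \<eta> a b = s * ((if a = b then 1 else 0) + \<mu>))"
proof -
  obtain a where "a \<in> C"
    using \<open>card C \<ge> 2\<close> by (metis card.empty ex_in_conv not_numeral_le_zero)
  moreover obtain a' where "a' \<in> C" "a' \<noteq> a"
    by (rule card_ge_2_other[OF \<open>card C \<ge> 2\<close> \<open>a \<in> C\<close>])
  ultimately have aa': "a \<in> C" "a' \<in> C" "a \<noteq> a'" by auto
  have "\<alpha> \<noteq> \<beta>"
  proof
    assume "\<alpha> = \<beta>"
    then have "\<forall>c\<in>C. \<eta> a c = \<eta> a' c" using \<eta> aa' by simp
    then show False using invertible_on_rows_differ[OF assms(1) aa'] by blast
  qed
  have "(\<Sum>b\<in>C. \<eta> a b) = \<alpha> + (of_nat (card C) - 1) * \<beta>" if "a \<in> C" for a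
  proof -
    have "(\<Sum>b\<in>C. \<eta> a b) = \<eta> a a + (\<Sum>b\<in>C - {a}. \<eta> a b)"
      using \<open>finite C\<close> that by (simp add: sum.remove)
    also have "(\<Sum>b\<in>C - {a}. \<eta> a b) = (\<Sum>b\<in>C - {a}. \<beta>)"
      using \<eta> that by (intro sum.cong) auto
    finally show ?thesis
      using \<eta> that \<open>finite C\<close> \<open>card C \<ge> 2\<close> by (simp add: of_nat_diff)
  qed
  then have rows: "\<alpha> + (of_nat (card C) - 1) * \<beta> \<noteq> 0"
    using invertible_on_row_sum_nonzero[OF assms(1,2) \<open>a \<in> C\<close>] by blast
  define s where "s = \<alpha> - \<beta>"
  define \<mu> where "\<mu> = \<beta> / s"
  have "s \<noteq> 0" using \<open>\<alpha> \<noteq> \<beta>\<close> unfolding s_def by simp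
  moreover have "\<mu> \<noteq> - 1 / of_nat (card C)"
  proof
    assume "\<mu> = - 1 / of_nat (card C)"
    then have "\<beta> * of_nat (card C) = - s"
      using \<open>s \<noteq> 0\<close> \<open>card C \<ge> 2\<close> unfolding \<mu>_def by (simp add: field_simps)
    then show False using rows unfolding s_def by (simp add: algebra_simps)
  qed
  moreover have "s * (1 + \<mu>) = \<alpha>" and "s * \<mu> = \<beta>"
    using \<open>s \<noteq> 0\<close> unfolding \<mu>_def by (simp_all add: distrib_left s_def)
  ultimately show ?thesis
    using \<eta> by (intro exI[of _ s] exI[of _ \<mu>]) simp
qed

theorem theorem1:
  fixes G :: "('a, 'b) monoid_scheme" and C :: "'a set" and \<eta> :: "'a \<Rightarrow> 'a \<Rightarrow> complex"
  assumes "group G" and "finite (carrier G)" and "cyclic_class G C"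
  shows "(invertible_on C \<eta> \<and> Ad_invariant G C \<eta>) \<longleftrightarrow>
         (\<exists>s \<mu>. s \<noteq> 0 \<and> \<mu> \<noteq> - 1 / of_nat (card C) \<and>
            (\<forall>a\<in>C. \<forall>b\<in>C. \<eta> a b = s * ((if a = b then 1 else 0) + \<mu>)))"
proof -
  interpret group G by fact
  have cc: "is_conj_class G C" and card: "card C \<ge> 2"
    using assms(3) unfolding cyclic_class_def by auto
  then have "finite C" by (metis card.infinite not_numeral_le_zero)
  show ?thesis
  proof safe
    assume "invertible_on C \<eta>" and "Ad_invariant G C \<eta>"
    obtain \<alpha> \<beta> where "\<forall>a\<in>C. \<forall>b\<in>C. \<eta> a b = (if a = b then \<alpha> else \<beta>)"
      using cyclic_class_invariant_form[OF assms(3)] \<open>Ad_invariant G C \<eta>\<close>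
      unfolding Ad_invariant_iff[OF cc] by metis
    then show "\<exists>s \<mu>. s \<noteq> 0 \<and> \<mu> \<noteq> - 1 / of_nat (card C) \<and>
        (\<forall>a\<in>C. \<forall>b\<in>C. \<eta> a b = s * ((if a = b then 1 else 0) + \<mu>))"
      by (rule invertible_on_two_valued_rescale[OF \<open>invertible_on C \<eta>\<close> \<open>finite C\<close> card])
  next
    fix s \<mu> :: complex
    assume "s \<noteq> 0" and "\<mu> \<noteq> - 1 / of_nat (card C)"
      and \<eta>: "\<forall>a\<in>C. \<forall>b\<in>C. \<eta> a b = s * ((if a = b then 1 else 0) + \<mu>)"
    then have "1 + of_nat (card C) * \<mu> \<noteq> 0"
      using card by (auto simp: field_simps add_eq_0_iff)
    with \<open>s \<noteq> 0\<close> \<eta> show "invertible_on C \<eta>"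
      by (intro invertible_on_delta_plus_const[OF \<open>finite C\<close>])
    show "Ad_invariant G C \<eta>"
      using Ad_invariant_if_eq[OF cc, of \<eta> "s * (1 + \<mu>)" "s * \<mu>"] \<eta> by auto
  qed
qed

end
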